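(* Let $q(x)=x^g+a_{g-1}x^{g-1}+\cdots+a_1x+a_0\in\mathbb{Z}[x]$ be irreducible over $\mathbb{Z}$, and suppose $|a_{g-1}|>2g$. Then $\mathrm{sym}(q)(x)=x^g\,q\!\left(x+\frac1x\right)$ satisfies the homological criterion, i.e. it is symplectically irreducible, is not a cyclotomic polynomial, and is not a polynomial in $x^k$ for any $k>1$.
   Context: A symplectic polynomial is an even-degree integer polynomial that is monic and palindromic (equivalently, the characteristic polynomial of an element of $\mathrm{Sp}(2n,\mathbb{Z})$). A symplectic polynomial is symplectically irreducible if it is not a product of two nontrivial symplectic polynomials. A cyclotomic polynomial is the minimal polynomial over $\mathbb{Q}$ of a primitive $n$-th root of unity. *)

theory Defs
  imports "HOL-Computational_Algebra.Computational_Algebra" Complex_Main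
begin

definition symplectic_poly :: "int poly \<Rightarrow> bool" where
  "symplectic_poly p \<longleftrightarrow> even (degree p) \<and> lead_coeff p = 1 \<and>
     (\<forall>i\<le>degree p. coeff p i = coeff p (degree p - i))"

definition symplectically_irreducible :: "int poly \<Rightarrow> bool" where
  "symplectically_irreducible p \<longleftrightarrow> symplectic_poly p \<and> degree p > 0 \<and>
     \<not> (\<exists>a b. symplectic_poly a \<and> symplectic_poly b \<and> degree a > 0 \<and> degree b > 0 \<and> p = a * b)"

definition primitive_root_of_unity :: "nat \<Rightarrow> complex \<Rightarrow> bool" where
  "primitive_root_of_unity n z \<longleftrightarrow> n > 0 \<and> z ^ n = 1 \<and> (\<forall>k. 0 < k \<and> k < n \<longrightarrow> z ^ k \<noteq> 1)"

definition is_min_poly_rat :: "rat poly \<Rightarrow> complex \<Rightarrow> bool" where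
  "is_min_poly_rat m z \<longleftrightarrow> lead_coeff m = 1 \<and> poly (map_poly of_rat m) z = 0 \<and>
     (\<forall>r :: rat poly. r \<noteq> 0 \<and> poly (map_poly of_rat r) z = 0 \<longrightarrow> degree m \<le> degree r)"

definition cyclotomic :: "int poly \<Rightarrow> bool" where
  "cyclotomic p \<longleftrightarrow> (\<exists>n z. primitive_root_of_unity n z \<and> is_min_poly_rat (map_poly of_int p) z)"

definition poly_in_power :: "int poly \<Rightarrow> nat \<Rightarrow> bool" where
  "poly_in_power p k \<longleftrightarrow> (\<exists>r. p = pcompose r (monom 1 k))"

text \<open>sym(q)(x) = x^g q(x + 1/x), g = deg q, written out as
  sum_i a_i (x^2+1)^i x^(g-i).\<close>
definition sym_poly :: "int poly \<Rightarrow> int poly" where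
  "sym_poly q = (\<Sum>i\<le>degree q. smult (coeff q i) ([:1, 0, 1:] ^ i * monom 1 (degree q - i)))"

end

theory Submission
  imports Defs
begin

text \<open>
  For d \<ge> deg r put S_d(r) = x^d r(x + 1/x), so that sym(q) = S_(deg q)(q). The map S is
  multiplicative, S_(d+e)(r s) = S_d(r) S_e(s), injective on polynomials of degree at most d,
  and its image consists exactly of the polynomials that are palindromic of width 2d: subtract
  c (x^2 + 1)^d to kill the constant term, divide by x and induct. Hence every symplectic
  polynomial is sym(r) for a monic r, and a symplectic factorisation of sym(q) pulls back to a
  factorisation of q.

  The coefficient of x^(2g-1) in sym(q) is a_(g-1). All roots of a cyclotomic polynomial lie on
  the unit circle, so its coefficient of x^(n-1), which is minus the sum of the roots, has
  absolute value at most n = 2g. Finally, x^(2g) and x^(2g-1) both occur in sym(q), so it is not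
  a polynomial in x^k for any k > 1.
\<close>

lemma map_poly_add:
  assumes "\<And>a b. f (a + b) = f a + f b" "f 0 = 0"
  shows "map_poly f (p + q) = map_poly f p + map_poly f q"
  by (rule poly_eqI) (simp add: coeff_map_poly assms)

lemma map_poly_diff:
  assumes "\<And>a b. f (a - b) = f a - f b" "f 0 = 0"
  shows "map_poly f (p - q) = map_poly f p - map_poly f q"
  by (rule poly_eqI) (simp add: coeff_map_poly assms)

lemma map_poly_mult:
  fixes f :: "'a::comm_ring_1 \<Rightarrow> 'b::comm_ring_1"
  assumes "\<And>a b. f (a + b) = f a + f b" "\<And>a b. f (a * b) = f a * f b" "f 0 = 0"
  shows "map_poly f (p * q) = map_poly f p * map_poly f q"
  by (induction p) (simp_all add: map_poly_add map_poly_smult map_poly_pCons assms)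

lemma map_poly_power:
  fixes f :: "'a::comm_ring_1 \<Rightarrow> 'b::comm_ring_1"
  assumes "\<And>a b. f (a + b) = f a + f b" "\<And>a b. f (a * b) = f a * f b" "f 0 = 0" "f 1 = 1"
  shows "map_poly f (p ^ n) = map_poly f p ^ n"
  by (induction n) (simp_all add: map_poly_mult assms)

lemma map_poly_sum:
  assumes "\<And>a b. f (a + b) = f a + f b" "f 0 = 0"
  shows "map_poly f (\<Sum>i\<in>A. g i) = (\<Sum>i\<in>A. map_poly f (g i))"
  by (induction A rule: infinite_finite_induct) (simp_all add: map_poly_add assms)

lemma poly_altdef_le:
  fixes x :: "'a::{comm_semiring_0,semiring_1}"
  assumes "degree p \<le> d"
  shows "poly p x = (\<Sum>i\<le>d. coeff p i * x ^ i)"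
proof -
  have "poly p x = (\<Sum>i\<le>degree p. coeff p i * x ^ i)"
    by (rule poly_altdef)
  also have "\<dots> = (\<Sum>i\<le>d. coeff p i * x ^ i)"
    using assms by (intro sum.mono_neutral_left) (auto simp: coeff_eq_0)
  finally show ?thesis .
qed

lemma int_poly_eqI_on_infinite:
  fixes p q :: "int poly" and A :: "real set"
  assumes "infinite A"
    and "\<And>x. x \<in> A \<Longrightarrow> poly (map_poly of_int p) x = poly (map_poly of_int q) x"
  shows "p = q"
proof -
  have "A \<subseteq> {x. poly (map_poly of_int (p - q)) x = 0}"
    using assms(2) by (auto simp: map_poly_diff)
  with assms(1) have "map_poly (of_int :: int \<Rightarrow> real) (p - q) = 0"
    using poly_roots_finite finite_subset by blast
  then show ?thesis
    by (simp add: map_poly_eq_0_iff)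
qed

lemma coeff_pcompose_monom:
  fixes p :: "'a::comm_semiring_1 poly"
  assumes "k > 0"
  shows "coeff (pcompose p (monom 1 k)) n = (if k dvd n then coeff p (n div k) else 0)"
proof (induction p arbitrary: n)
  case (pCons a p)
  show ?case
  proof (cases "n < k")
    case True
    then show ?thesis
      using assms
      by (auto simp: pcompose_pCons coeff_monom_mult coeff_pCons dest: dvd_imp_le split: nat.split)
  next
    case False
    then have "k dvd n \<longleftrightarrow> k dvd n - k" "n div k = Suc ((n - k) div k)"
      using assms by (auto simp: dvd_minus_self div_if)
    then show ?thesis
      using False assms pCons.IH
      by (auto simp: pcompose_pCons coeff_monom_mult coeff_pCons split: nat.split)
  qed
qed simp

lemma pCons_0_sum: "pCons 0 (\<Sum>i\<in>A. f i) = (\<Sum>i\<in>A. pCons 0 (f i))"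
  by (rule poly_eqI) (simp add: coeff_pCons coeff_sum split: nat.split)

lemma coeff_X2_plus_1_power_odd: "odd k \<Longrightarrow> coeff ([:1, 0, 1:] ^ n) k = 0"
proof (induction n arbitrary: k)
  case (Suc n)
  then show ?case
    by (auto simp: coeff_pCons split: nat.split)
qed (auto dest: odd_pos)

lemma coeff_X2_plus_1_power_top: "coeff ([:1, 0, 1:] ^ n :: 'a::idom poly) (2 * n) = 1"
  using lead_coeff_power[of "[:1, 0, 1:] :: 'a poly" n] by (simp add: degree_power_eq mult_2)

lemma degree_pos_if_monic_irreducible:
  fixes q :: "'a::comm_semiring_1 poly"
  assumes "lead_coeff q = 1" "irreducible q"
  shows "degree q > 0"
proof (rule ccontr)
  assume "\<not> degree q > 0"
  then have "degree q = 0"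
    by simp
  then have "q = 1"
    using assms(1) degree_0_id[of q] by (simp add: one_pCons)
  with assms(2) show False
    by simp
qed

section \<open>Palindromic polynomials\<close>

(* Phrased with i + j = n rather than with n - i, so that the unfolded definition is not a
   looping simp rule. *)
definition palindromic :: "nat \<Rightarrow> 'a::zero poly \<Rightarrow> bool" where
  "palindromic n p \<longleftrightarrow> degree p \<le> n \<and> (\<forall>i j. i + j = n \<longrightarrow> coeff p i = coeff p j)"

lemma symplectic_poly_iff_palindromic:
  "symplectic_poly p \<longleftrightarrow> even (degree p) \<and> lead_coeff p = 1 \<and> palindromic (degree p) p"
proof -
  have "(\<forall>i\<le>degree p. coeff p i = coeff p (degree p - i)) \<longleftrightarrow>
        (\<forall>i j. i + j = degree p \<longrightarrow> coeff p i = coeff p j)"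
    by (metis add_diff_cancel_left' le_add1 le_add_diff_inverse)
  then show ?thesis
    by (simp add: symplectic_poly_def palindromic_def)
qed

lemma palindromic_add:
  "palindromic n p \<Longrightarrow> palindromic n q \<Longrightarrow> palindromic n (p + q)"
  by (simp add: palindromic_def degree_add_le)

lemma palindromic_diff:
  "palindromic n p \<Longrightarrow> palindromic n q \<Longrightarrow> palindromic n (p - q)"
  for p q :: "'a::ab_group_add poly"
  by (simp add: palindromic_def degree_diff_le)

lemma palindromic_smult: "palindromic n p \<Longrightarrow> palindromic n (smult c p)"
  by (simp add: palindromic_def order.trans[OF degree_smult_le])

lemma palindromic_if_reflect_poly_eq:
  assumes "reflect_poly p = p"
  shows "palindromic (degree p) p"
proof -
  have "coeff p i = coeff p j" if "i + j = degree p" for i j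
  proof -
    have "coeff p i = coeff (reflect_poly p) i"
      by (simp only: assms)
    also have "\<dots> = coeff p (degree p - i)"
      using that by (simp add: coeff_reflect_poly)
    also have "degree p - i = j"
      using that by simp
    finally show ?thesis .
  qed
  then show ?thesis
    by (simp add: palindromic_def)
qed

lemma palindromic_X2_plus_1_power:
  "palindromic (2 * n) ([:1, 0, 1:] ^ n :: 'a::idom poly)"
proof -
  have "reflect_poly [:1, 0, 1:] = ([:1, 0, 1:] :: 'a poly)"
    by (simp add: reflect_poly_pCons' monom_Suc monom_0 one_pCons)
  then have "reflect_poly ([:1, 0, 1:] ^ n) = ([:1, 0, 1:] ^ n :: 'a poly)"
    by (simp add: reflect_poly_power)
  from palindromic_if_reflect_poly_eq[OF this] show ?thesis
    by (simp add: degree_power_eq mult_2)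
qed

lemma palindromic_pCons_0_iff:
  "palindromic (Suc (Suc n)) (pCons 0 p) \<longleftrightarrow> palindromic n p"
proof
  assume "palindromic (Suc (Suc n)) (pCons 0 p)"
  then have deg: "degree (pCons 0 p) \<le> Suc (Suc n)"
    and mirror: "\<And>i j. i + j = Suc (Suc n) \<Longrightarrow> coeff (pCons 0 p) i = coeff (pCons 0 p) j"
    by (simp_all add: palindromic_def)
  have "coeff p (Suc n) = 0"
    using mirror[of 0 "Suc (Suc n)"] by simp
  then have "degree p \<noteq> Suc n"
    by (metis leading_coeff_0_iff degree_0 nat.distinct(1))
  moreover have "degree p \<le> Suc n"
    using deg by (cases "p = 0") simp_all
  ultimately have "degree p \<le> n"
    by simp
  moreover have "coeff p i = coeff p j" if "i + j = n" for i j
    using mirror[of "Suc i" "Suc j"] that by simp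
  ultimately show "palindromic n p"
    by (simp add: palindromic_def)
next
  assume "palindromic n p"
  then have deg: "degree p \<le> n" and mirror: "\<And>i j. i + j = n \<Longrightarrow> coeff p i = coeff p j"
    by (simp_all add: palindromic_def)
  have "coeff (pCons 0 p) i = coeff (pCons 0 p) j" if "i + j = Suc (Suc n)" for i j
  proof (cases "i = 0 \<or> j = 0")
    case True
    then show ?thesis
      using that deg by (auto simp: coeff_eq_0)
  next
    case False
    then obtain i' j' where "i = Suc i'" "j = Suc j'"
      by (meson not0_implies_Suc)
    then show ?thesis
      using that mirror[of i' j'] by simp
  qed
  with deg show "palindromic (Suc (Suc n)) (pCons 0 p)"
    by (simp add: palindromic_def)
qed

section \<open>Polynomials of the form x^d r(x + 1/x)\<close>

definition sym_poly_deg :: "nat \<Rightarrow> 'a::comm_semiring_1 poly \<Rightarrow> 'a poly" where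
  "sym_poly_deg d r = (\<Sum>i\<le>d. smult (coeff r i) ([:1, 0, 1:] ^ i * monom 1 (d - i)))"

lemma sym_poly_eq_sym_poly_deg: "sym_poly q = sym_poly_deg (degree q) q"
  by (simp add: sym_poly_def sym_poly_deg_def)

lemma poly_sym_poly_deg:
  fixes x :: "'a::field"
  assumes "degree r \<le> d" "x \<noteq> 0"
  shows "poly (map_poly of_int (sym_poly_deg d r)) x = x ^ d * poly (map_poly of_int r) (x + 1 / x)"
proof -
  have "poly (map_poly of_int (sym_poly_deg d r)) x =
        (\<Sum>i\<le>d. of_int (coeff r i) * ((x * x + 1) ^ i * x ^ (d - i)))"
    by (simp add: sym_poly_deg_def map_poly_sum map_poly_mult map_poly_power map_poly_smult
        poly_sum map_poly_pCons map_poly_monom poly_monom algebra_simps)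
  also have "\<dots> = x ^ d * (\<Sum>i\<le>d. of_int (coeff r i) * (x + 1 / x) ^ i)"
    unfolding sum_distrib_left
  proof (rule sum.cong)
    fix i assume "i \<in> {..d}"
    then have "x ^ d = x ^ i * x ^ (d - i)"
      by (simp flip: power_add)
    moreover have "x ^ i * (x + 1 / x) ^ i = (x * x + 1) ^ i"
      using assms(2) by (simp flip: power_mult_distrib add: field_simps)
    ultimately show "of_int (coeff r i) * ((x * x + 1) ^ i * x ^ (d - i)) =
                     x ^ d * (of_int (coeff r i) * (x + 1 / x) ^ i)"
      by (simp add: algebra_simps)
  qed simp
  also have "(\<Sum>i\<le>d. of_int (coeff r i) * (x + 1 / x) ^ i) =
             poly (map_poly of_int r) (x + 1 / x)"
    using assms(1) order.trans[OF map_poly_degree_leq]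
    by (subst poly_altdef_le[of _ d]) (auto simp: coeff_map_poly)
  finally show ?thesis .
qed

lemma sym_poly_deg_mult:
  fixes r s :: "int poly"
  assumes "degree r \<le> d1" "degree s \<le> d2"
  shows "sym_poly_deg (d1 + d2) (r * s) = sym_poly_deg d1 r * sym_poly_deg d2 s"
proof (rule int_poly_eqI_on_infinite)
  show "infinite {0::real<..}"
    by (simp add: infinite_Ioi)
  have "degree (r * s) \<le> d1 + d2"
    using assms degree_mult_le[of r s] by linarith
  then show "poly (map_poly of_int (sym_poly_deg (d1 + d2) (r * s))) x =
             poly (map_poly of_int (sym_poly_deg d1 r * sym_poly_deg d2 s)) x"
    if "x \<in> {0<..}" for x :: real
    using that assms by (simp add: poly_sym_poly_deg map_poly_mult power_add)
qed

lemma sym_poly_deg_0 [simp]: "sym_poly_deg 0 r = [:coeff r 0:]"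
  by (simp add: sym_poly_deg_def)

lemma sym_poly_deg_Suc:
  "sym_poly_deg (Suc d) r =
     smult (coeff r (Suc d)) ([:1, 0, 1:] ^ Suc d) + pCons 0 (sym_poly_deg d r)"
proof -
  have "(\<Sum>i\<le>d. smult (coeff r i) ([:1, 0, 1:] ^ i * monom 1 (Suc d - i))) =
        (\<Sum>i\<le>d. pCons 0 (smult (coeff r i) ([:1, 0, 1:] ^ i * monom 1 (d - i))))"
    by (intro sum.cong) (simp_all add: Suc_diff_le monom_Suc)
  then show ?thesis
    unfolding sym_poly_deg_def sum.atMost_Suc pCons_0_sum
    by (simp add: add.commute del: power_Suc)
qed

lemma degree_sym_poly_deg_le: "degree (sym_poly_deg d r) \<le> 2 * d"
proof (induction d)
  case (Suc d)
  have "degree (smult (coeff r (Suc d)) ([:1, 0, 1:] ^ Suc d)) \<le> 2 * Suc d"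
    by (rule order.trans[OF degree_smult_le order.trans[OF degree_power_le]]) simp
  moreover have "degree (pCons 0 (sym_poly_deg d r)) \<le> 2 * Suc d"
    using Suc.IH by (cases "sym_poly_deg d r = 0") simp_all
  ultimately show ?case
    by (simp add: sym_poly_deg_Suc degree_add_le)
qed simp

lemma coeff_sym_poly_deg_top:
  "coeff (sym_poly_deg d r) (2 * d) = coeff (r :: 'a::idom poly) d"
proof (cases d)
  case (Suc d')
  have "coeff (sym_poly_deg d' r) (Suc (2 * d')) = 0"
    using degree_sym_poly_deg_le[of d' r] by (simp add: coeff_eq_0)
  then show ?thesis
    using Suc coeff_X2_plus_1_power_top[of "Suc d'", where 'a='a]
    by (simp add: sym_poly_deg_Suc del: power_Suc)
qed simp

lemma coeff_sym_poly_deg_below_top: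
  "coeff (sym_poly_deg (Suc d) r) (Suc (2 * d)) = coeff (r :: 'a::idom poly) d"
  by (simp add: sym_poly_deg_Suc coeff_X2_plus_1_power_odd coeff_sym_poly_deg_top del: power_Suc)

lemma palindromic_sym_poly_deg:
  "palindromic (2 * d) (sym_poly_deg d (r :: 'a::idom poly))"
proof (induction d)
  case 0
  show ?case
    by (simp add: palindromic_def)
next
  case (Suc d)
  then have "palindromic (2 * Suc d) (pCons 0 (sym_poly_deg d r))"
    by (simp add: palindromic_pCons_0_iff)
  then show ?case
    unfolding sym_poly_deg_Suc
    by (intro palindromic_add palindromic_smult palindromic_X2_plus_1_power)
qed

lemma sym_poly_deg_eq_iff_coeff:
  fixes r s :: "'a::idom poly"
  shows "sym_poly_deg d r = sym_poly_deg d s \<longleftrightarrow> (\<forall>i\<le>d. coeff r i = coeff s i)"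
proof
  show "sym_poly_deg d r = sym_poly_deg d s \<Longrightarrow> \<forall>i\<le>d. coeff r i = coeff s i"
  proof (induction d)
    case (Suc d)
    have coeff_0: "coeff (sym_poly_deg (Suc d) p) 0 = coeff p (Suc d)" for p :: "'a poly"
      by (simp add: sym_poly_deg_Suc coeff_0_power del: power_Suc)
    with Suc.prems have top: "coeff r (Suc d) = coeff s (Suc d)"
      by metis
    with Suc.prems have "sym_poly_deg d r = sym_poly_deg d s"
      by (simp add: sym_poly_deg_Suc del: power_Suc)
    with Suc.IH top show ?case
      by (auto simp: le_Suc_eq)
  qed simp
next
  show "\<forall>i\<le>d. coeff r i = coeff s i \<Longrightarrow> sym_poly_deg d r = sym_poly_deg d s"
    unfolding sym_poly_deg_def by (intro sum.cong) simp_all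
qed

lemma sym_poly_deg_eq_iff:
  fixes r s :: "'a::idom poly"
  assumes "degree r \<le> d" "degree s \<le> d"
  shows "sym_poly_deg d r = sym_poly_deg d s \<longleftrightarrow> r = s"
proof
  assume "sym_poly_deg d r = sym_poly_deg d s"
  then have "\<forall>i\<le>d. coeff r i = coeff s i"
    by (simp add: sym_poly_deg_eq_iff_coeff)
  then show "r = s"
    by (intro poly_eqI) (metis assms coeff_eq_0 le_less_trans not_le)
qed simp

lemma palindromic_imp_sym_poly_deg:
  fixes p :: "'a::idom poly"
  assumes "palindromic (2 * d) p"
  shows "\<exists>r. degree r \<le> d \<and> p = sym_poly_deg d r"
  using assms
proof (induction d arbitrary: p)
  case 0
  then have "degree p = 0"
    by (simp add: palindromic_def)
  then show ?case
    by (metis degree_0_id sym_poly_deg_0 order.refl)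
next
  case (Suc d)
  define c where "c = coeff p 0"
  define p1 where "p1 = p - smult c ([:1, 0, 1:] ^ Suc d)"
  have "coeff p1 0 = 0"
    by (simp add: p1_def c_def coeff_0_power del: power_Suc)
  then obtain p' where p1: "p1 = pCons 0 p'"
    by (metis pCons_cases coeff_pCons_0)
  have "palindromic (2 * Suc d) p1"
    unfolding p1_def
    by (intro palindromic_diff palindromic_smult Suc.prems palindromic_X2_plus_1_power)
  then have "palindromic (2 * d) p'"
    by (simp add: p1 palindromic_pCons_0_iff)
  then obtain r where r: "degree r \<le> d" "p' = sym_poly_deg d r"
    using Suc.IH by blast
  define r' where "r' = r + monom c (Suc d)"
  have "sym_poly_deg d r = sym_poly_deg d r'"
    by (simp add: sym_poly_deg_eq_iff_coeff r'_def)
  moreover have "coeff r' (Suc d) = c"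
    using r(1) by (simp add: r'_def coeff_eq_0)
  moreover have "p = smult c ([:1, 0, 1:] ^ Suc d) + p1"
    by (simp add: p1_def)
  ultimately have "p = sym_poly_deg (Suc d) r'"
    using r(2) p1 by (simp add: sym_poly_deg_Suc del: power_Suc)
  moreover have "degree r' \<le> Suc d"
    using r(1) by (simp add: r'_def degree_add_le degree_monom_le)
  ultimately show ?case
    by metis
qed

section \<open>Roots of cyclotomic polynomials\<close>

lemma coeff_prod_linear_factors:
  fixes a :: "nat \<Rightarrow> 'a::idom"
  shows "coeff (\<Prod>i<Suc n. [:- a i, 1:]) n = - (\<Sum>i<Suc n. a i)"
proof (induction n)
  case (Suc n)
  define P where "P = (\<Prod>i<Suc n. [:- a i, 1:])"
  have "lead_coeff P = 1"
    unfolding P_def by (simp add: lead_coeff_prod del: prod.lessThan_Suc)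
  moreover have "degree P = Suc n"
    unfolding P_def by (simp add: degree_prod_sum_eq del: prod.lessThan_Suc)
  ultimately have "coeff P (Suc n) = 1"
    by simp
  then have "coeff (P * [:- a (Suc n), 1:]) (Suc n) = - a (Suc n) + coeff P n"
    by simp
  with Suc.IH show ?case
    by (simp add: P_def)
qed simp

lemma norm_coeff_below_top_le:
  fixes p :: "complex poly"
  assumes "lead_coeff p = 1" "degree p = Suc n" "\<And>z. poly p z = 0 \<Longrightarrow> norm z \<le> 1"
  shows "norm (coeff p n) \<le> Suc n"
proof -
  obtain root where "smult (lead_coeff p) (\<Prod>i<degree p. [:- root i, 1:]) = p"
    by (rule complex_poly_decompose')
  with assms(1,2) have p: "p = (\<Prod>i<Suc n. [:- root i, 1:])"
    by simp
  have root_norm: "norm (root i) \<le> 1" if "i < Suc n" for i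
    using that
    by (intro assms(3)) (auto simp: p poly_prod prod_zero_iff simp del: prod.lessThan_Suc)
  have "norm (coeff p n) = norm (\<Sum>i<Suc n. root i)"
    by (simp add: p coeff_prod_linear_factors del: prod.lessThan_Suc sum.lessThan_Suc)
  also have "\<dots> \<le> (\<Sum>i<Suc n. norm (root i))"
    by (rule norm_sum)
  also have "\<dots> \<le> (\<Sum>i<Suc n. 1)"
    by (rule sum_mono) (simp add: root_norm)
  finally show ?thesis
    by simp
qed

lemma is_min_poly_rat_dvd:
  assumes "is_min_poly_rat m z" "poly (map_poly of_rat p) z = 0"
  shows "m dvd p"
proof -
  have m: "lead_coeff m = 1" "poly (map_poly of_rat m) z = 0"
    and min: "\<And>r. r \<noteq> 0 \<Longrightarrow> poly (map_poly of_rat r) z = 0 \<Longrightarrow> degree m \<le> degree r"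
    using assms(1) unfolding is_min_poly_rat_def by auto
  have "poly (map_poly of_rat (p mod m)) z = 0"
    using assms(2) m(2) div_mult_mod_eq[of p m]
    by (metis (no_types, lifting) add_0 map_poly_add map_poly_mult of_rat_0 of_rat_add of_rat_mult
        mult_zero_right poly_add poly_mult)
  then have "p mod m = 0"
    using min degree_mod_less[of m p] m(1) by (metis leD leading_coeff_0_iff zero_neq_one)
  then show ?thesis
    by (simp add: mod_eq_0_iff_dvd)
qed

lemma norm_root_cyclotomic:
  assumes "cyclotomic p" "poly (map_poly of_int p) w = 0"
  shows "norm (w :: complex) = 1"
proof -
  obtain n z where nz: "primitive_root_of_unity n z" "is_min_poly_rat (map_poly of_int p) z"
    using assms(1) unfolding cyclotomic_def by blast
  have poly_xn1: "poly (map_poly of_rat (monom 1 n - 1)) x = x ^ n - 1" for x :: complex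
    by (simp add: map_poly_diff of_rat_diff map_poly_monom poly_monom)
  have "map_poly of_int p dvd (monom 1 n - 1 :: rat poly)"
    using nz by (intro is_min_poly_rat_dvd) (auto simp: poly_xn1 primitive_root_of_unity_def)
  then obtain f where f: "monom 1 n - 1 = map_poly of_int p * (f :: rat poly)"
    by (elim dvdE)
  have "map_poly (of_rat :: rat \<Rightarrow> complex) (map_poly of_int p) = map_poly of_int p"
    by (simp add: map_poly_map_poly o_def)
  then have "w ^ n - 1 = poly (map_poly of_int p) w * poly (map_poly of_rat f) w"
    by (simp flip: poly_xn1 add: f map_poly_mult of_rat_add of_rat_mult)
  then have "w ^ n = 1"
    using assms(2) by simp
  then show ?thesis
    using nz(1) power_eq_1_iff by (auto simp: primitive_root_of_unity_def)
qed

section \<open>The polynomial sym(q)\<close>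

lemma coeff_sym_poly_top: "coeff (sym_poly q) (2 * degree q) = lead_coeff q"
  by (simp add: sym_poly_eq_sym_poly_deg coeff_sym_poly_deg_top)

lemma degree_sym_poly: "degree (sym_poly q) = 2 * degree q"
proof (cases "q = 0")
  case False
  then have "2 * degree q \<le> degree (sym_poly q)"
    by (intro le_degree) (simp add: coeff_sym_poly_top)
  moreover have "degree (sym_poly q) \<le> 2 * degree q"
    by (simp add: sym_poly_eq_sym_poly_deg degree_sym_poly_deg_le)
  ultimately show ?thesis
    by linarith
qed (simp add: sym_poly_def)

lemma lead_coeff_sym_poly: "lead_coeff (sym_poly q) = lead_coeff q"
  by (simp add: degree_sym_poly coeff_sym_poly_top)

lemma symplectic_sym_poly:
  assumes "lead_coeff q = 1"
  shows "symplectic_poly (sym_poly q)"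
proof -
  have "palindromic (2 * degree q) (sym_poly q)"
    by (simp add: sym_poly_eq_sym_poly_deg palindromic_sym_poly_deg)
  then show ?thesis
    using assms lead_coeff_sym_poly[of q]
    by (simp add: symplectic_poly_iff_palindromic degree_sym_poly)
qed

lemma symplectic_poly_imp_sym_poly:
  assumes "symplectic_poly p"
  shows "\<exists>r. lead_coeff r = 1 \<and> p = sym_poly r"
proof -
  obtain d where d: "degree p = 2 * d" and "lead_coeff p = 1" and "palindromic (2 * d) p"
    using assms by (auto simp: symplectic_poly_iff_palindromic elim!: evenE)
  then obtain r where r: "degree r \<le> d" "p = sym_poly_deg d r"
    using palindromic_imp_sym_poly_deg by blast
  have "coeff r d = 1"
    using d \<open>lead_coeff p = 1\<close> by (simp add: r(2) coeff_sym_poly_deg_top)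
  then have "degree r = d"
    using r(1) by (simp add: le_antisym le_degree)
  with r \<open>coeff r d = 1\<close> show ?thesis
    by (auto simp: sym_poly_eq_sym_poly_deg)
qed

lemma sym_poly_mult: "sym_poly (r * s) = sym_poly r * sym_poly s"
proof (cases "r = 0 \<or> s = 0")
  case False
  then show ?thesis
    by (simp add: sym_poly_eq_sym_poly_deg degree_mult_eq sym_poly_deg_mult)
qed (auto simp: sym_poly_def)

lemma sym_poly_inject: "sym_poly r = sym_poly s \<longleftrightarrow> r = s"
proof
  assume eq: "sym_poly r = sym_poly s"
  then have "degree r = degree s"
    using degree_sym_poly[of r] degree_sym_poly[of s] by simp
  with eq show "r = s"
    by (simp add: sym_poly_eq_sym_poly_deg sym_poly_deg_eq_iff)
qed simp

lemma symplectically_irreducible_sym_poly: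
  assumes "lead_coeff q = 1" "irreducible q"
  shows "symplectically_irreducible (sym_poly q)"
  unfolding symplectically_irreducible_def
proof (intro conjI notI)
  show "symplectic_poly (sym_poly q)"
    using assms(1) by (rule symplectic_sym_poly)
  show "degree (sym_poly q) > 0"
    using degree_pos_if_monic_irreducible[OF assms] by (simp add: degree_sym_poly)
next
  assume "\<exists>a b. symplectic_poly a \<and> symplectic_poly b \<and> 0 < degree a \<and> 0 < degree b \<and>
                 sym_poly q = a * b"
  then obtain a b where "symplectic_poly a" "symplectic_poly b" "degree a > 0" "degree b > 0"
    and q: "sym_poly q = a * b"
    by blast
  obtain r s where ab: "a = sym_poly r" "b = sym_poly s"
    using \<open>symplectic_poly a\<close> \<open>symplectic_poly b\<close> symplectic_poly_imp_sym_poly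
    by blast
  with \<open>degree a > 0\<close> \<open>degree b > 0\<close> have "degree r > 0" "degree s > 0"
    by (simp_all add: degree_sym_poly)
  from q ab have "q = r * s"
    by (simp flip: sym_poly_mult add: sym_poly_inject)
  with assms(2) have "r dvd 1 \<or> s dvd 1"
    by (simp add: irreducible_def)
  with \<open>degree r > 0\<close> \<open>degree s > 0\<close> show False
    by (auto simp: is_unit_poly_iff)
qed

lemma not_cyclotomic_sym_poly:
  assumes "lead_coeff q = 1" "degree q > 0" "\<bar>coeff q (degree q - 1)\<bar> > 2 * int (degree q)"
  shows "\<not> cyclotomic (sym_poly q)"
proof
  assume cyc: "cyclotomic (sym_poly q)"
  obtain h where h: "degree q = Suc h"
    using assms(2) gr0_implies_Suc by blast
  define p where "p = map_poly (of_int :: int \<Rightarrow> complex) (sym_poly q)"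
  have "degree (sym_poly q) = Suc (Suc (2 * h))" "lead_coeff (sym_poly q) = 1"
    using assms(1) h lead_coeff_sym_poly[of q] by (simp_all add: degree_sym_poly)
  then have "degree p = Suc (Suc (2 * h))" "lead_coeff p = 1"
    by (simp_all add: p_def degree_map_poly coeff_map_poly)
  moreover have "coeff p (Suc (2 * h)) = of_int (coeff q h)"
    using h
    by (simp add: p_def coeff_map_poly sym_poly_eq_sym_poly_deg coeff_sym_poly_deg_below_top)
  moreover have "norm z \<le> 1" if "poly p z = 0" for z
    using norm_root_cyclotomic[OF cyc] that by (simp add: p_def)
  ultimately have "norm (of_int (coeff q h) :: complex) \<le> Suc (Suc (2 * h))"
    using norm_coeff_below_top_le[of p "Suc (2 * h)"] by simp
  with assms(3) h show False
    by (simp add: norm_of_int)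
qed

lemma not_poly_in_power_sym_poly:
  assumes "degree q > 0" "coeff q (degree q - 1) \<noteq> 0" "k > 1"
  shows "\<not> poly_in_power (sym_poly q) k"
proof
  assume "poly_in_power (sym_poly q) k"
  then obtain r where r: "sym_poly q = pcompose r (monom 1 k)"
    unfolding poly_in_power_def by blast
  obtain h where h: "degree q = Suc h"
    using assms(1) gr0_implies_Suc by blast
  have "lead_coeff q \<noteq> 0"
    using assms(1) by auto
  then have "coeff (sym_poly q) (Suc (Suc (2 * h))) \<noteq> 0"
    using coeff_sym_poly_top[of q] h by simp
  then have "k dvd Suc (Suc (2 * h))"
    using assms(3) by (simp add: r coeff_pcompose_monom split: if_splits)
  moreover have "coeff (sym_poly q) (Suc (2 * h)) \<noteq> 0"
    using assms(2) h by (simp add: sym_poly_eq_sym_poly_deg coeff_sym_poly_deg_below_top)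
  then have "k dvd Suc (2 * h)"
    using assms(3) by (simp add: r coeff_pcompose_monom split: if_splits)
  ultimately have "k dvd Suc (Suc (2 * h)) - Suc (2 * h)"
    by (rule dvd_diff_nat)
  with assms(3) show False
    by simp
qed

theorem proposition3p4:
  fixes q :: "int poly"
  assumes "lead_coeff q = 1"
    and "irreducible q"
    and "\<bar>coeff q (degree q - 1)\<bar> > 2 * int (degree q)"
  shows "symplectically_irreducible (sym_poly q) \<and> \<not> cyclotomic (sym_poly q) \<and>
         (\<forall>k>1. \<not> poly_in_power (sym_poly q) k)"
proof -
  have "degree q > 0"
    using assms(1,2) by (rule degree_pos_if_monic_irreducible)
  moreover have "coeff q (degree q - 1) \<noteq> 0"
    using assms(3) by auto
  ultimately show ?thesis
    using symplectically_irreducible_sym_poly[OF assms(1,2)]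
      not_cyclotomic_sym_poly[OF assms(1) _ assms(3)] not_poly_in_power_sym_poly
    by blast
qed

end
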